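(* Let $\mathbf{H}\in\mathbb{R}^{M\times N}$ be arbitrary, $\sigma>0$, $k\in[N]$, and consider observations $\mathbf{y}=\mathbf{H}\mathbf{x}+\mathbf{n}$ with $\mathbf{n}\sim\mathcal{N}(\mathbf{0},\sigma^2\mathbf{I})$ and parameter function $g(\mathbf{x})=x_k$. Let $\mathcal{X}\subseteq\mathbb{R}^N$ contain a nonempty open set, let $\mathbf{x}_0\in\mathcal{X}$, and let $c:\mathbb{R}^N\to\mathbb{R}$ be valid at $\mathbf{x}_0$ for the parameter set $\mathbb{R}^N$. Let $M_{\mathrm{LGM}}(c,\mathbf{x}_0)$ be the minimum achievable variance at $\mathbf{x}_0$ with bias prescribed as $c$ on $\mathbb{R}^N$, and $M'(c,\mathbf{x}_0)$ the minimum achievable variance at $\mathbf{x}_0$ with bias prescribed as $c$ on $\mathcal{X}$ only. Then $M'(c,\mathbf{x}_0)=M_{\mathrm{LGM}}(c,\mathbf{x}_0)$. Moreover, the LMV estimator at $\mathbf{x}_0$ for parameter set $\mathbb{R}^N$ and bias $c$ is also the LMV estimator at $\mathbf{x}_0$ for parameter set $\mathcal{X}$ and bias $c|_{\mathcal{X}}$.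
   Context: For a parameter set $\mathcal{Y}\subseteq\mathbb{R}^N$ containing $\mathbf{x}_0$ and bias function $c$ on $\mathcal{Y}$: an estimator $\hat g:\mathbb{R}^M\to\mathbb{R}$ is allowed if $v(\hat g;\mathbf{x}_0)=\mathsf{E}_{\mathbf{x}_0}\{(\hat g(\mathbf{y})-\mathsf{E}_{\mathbf{x}_0}\hat g(\mathbf{y}))^2\}<\infty$ and $\mathsf{E}_{\mathbf{x}}\{\hat g(\mathbf{y})\}-x_k=c(\mathbf{x})$ for all $\mathbf{x}\in\mathcal{Y}$; $c$ is valid at $\mathbf{x}_0$ if an allowed estimator exists; the minimum achievable variance is the infimum of $v(\hat g;\mathbf{x}_0)$ over allowed estimators ($+\infty$ if none), and an LMV estimator is an allowed estimator attaining it. *)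

theory Defs
  imports "HOL-Analysis.Analysis" "HOL-Probability.Probability"
begin

text \<open>Linear Gaussian model y = H x + n, n ~ N(0, sigma^2 I), with
  x in R^N (type real^'n) and y in R^M (type real^'m).\<close>

definition gauss_dens :: "real \<Rightarrow> real^'m \<Rightarrow> real" where
  "gauss_dens \<sigma> z =
     (2 * pi * \<sigma>\<^sup>2) powr (- real CARD('m) / 2) * exp (- (norm z)\<^sup>2 / (2 * \<sigma>\<^sup>2))"

definition obs_meas :: "real^'n^'m \<Rightarrow> real \<Rightarrow> real^'n \<Rightarrow> (real^'m) measure" where
  "obs_meas H \<sigma> x = density lborel (\<lambda>y. ennreal (gauss_dens \<sigma> (y - H *v x)))"

definition lgm_mean :: "real^'n^'m \<Rightarrow> real \<Rightarrow> real^'n \<Rightarrow> (real^'m \<Rightarrow> real) \<Rightarrow> real" where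
  "lgm_mean H \<sigma> x g = integral\<^sup>L (obs_meas H \<sigma> x) g"

definition lgm_var :: "real^'n^'m \<Rightarrow> real \<Rightarrow> real^'n \<Rightarrow> (real^'m \<Rightarrow> real) \<Rightarrow> real" where
  "lgm_var H \<sigma> x g = integral\<^sup>L (obs_meas H \<sigma> x) (\<lambda>y. (g y - lgm_mean H \<sigma> x g)\<^sup>2)"

definition allowed ::
  "real^'n^'m \<Rightarrow> real \<Rightarrow> 'n \<Rightarrow> (real^'n) set \<Rightarrow> (real^'n \<Rightarrow> real) \<Rightarrow> real^'n
    \<Rightarrow> (real^'m \<Rightarrow> real) \<Rightarrow> bool" where
  "allowed H \<sigma> k Y c x0 g \<longleftrightarrow>
     g \<in> borel_measurable borel \<and>
     integrable (obs_meas H \<sigma> x0) (\<lambda>y. (g y - lgm_mean H \<sigma> x0 g)\<^sup>2) \<and>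
     (\<forall>x\<in>Y. integrable (obs_meas H \<sigma> x) g \<and> lgm_mean H \<sigma> x g - x $ k = c x)"

definition valid_bias ::
  "real^'n^'m \<Rightarrow> real \<Rightarrow> 'n \<Rightarrow> (real^'n) set \<Rightarrow> (real^'n \<Rightarrow> real) \<Rightarrow> real^'n \<Rightarrow> bool" where
  "valid_bias H \<sigma> k Y c x0 \<longleftrightarrow> (\<exists>g. allowed H \<sigma> k Y c x0 g)"

text \<open>Minimum achievable variance (+\<infinity> if there is no allowed estimator).\<close>
definition min_var ::
  "real^'n^'m \<Rightarrow> real \<Rightarrow> 'n \<Rightarrow> (real^'n) set \<Rightarrow> (real^'n \<Rightarrow> real) \<Rightarrow> real^'n \<Rightarrow> ereal" where
  "min_var H \<sigma> k Y c x0 =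
     (INF g \<in> {g. allowed H \<sigma> k Y c x0 g}. ereal (lgm_var H \<sigma> x0 g))"

definition is_LMV ::
  "real^'n^'m \<Rightarrow> real \<Rightarrow> 'n \<Rightarrow> (real^'n) set \<Rightarrow> (real^'n \<Rightarrow> real) \<Rightarrow> real^'n
    \<Rightarrow> (real^'m \<Rightarrow> real) \<Rightarrow> bool" where
  "is_LMV H \<sigma> k Y c x0 g \<longleftrightarrow>
     allowed H \<sigma> k Y c x0 g \<and> ereal (lgm_var H \<sigma> x0 g) = min_var H \<sigma> k Y c x0"

end

theory Submission
  imports Defs
begin

text \<open>Let \<open>g\<close> be allowed for the bias \<open>c\<close> on \<open>X\<close> and \<open>g\<^sub>0\<close> allowed for \<open>c\<close> on all of
  \<open>\<real>\<^sup>N\<close>.  Then \<open>h = g - g\<^sub>0\<close> satisfies \<open>E\<^sub>x h = 0\<close> on an open ball \<open>B \<subseteq> X\<close>.  Now \<open>E\<^sub>x h\<close> is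
  the Gaussian convolution of \<open>h\<close> at \<open>Hx\<close>, and along a line \<open>x\<^sub>1 + t v\<close> through the centre
  of \<open>B\<close> it equals \<open>exp (-\<beta> t\<^sup>2)\<close> times an everywhere convergent power series in \<open>t\<close>.  That
  series vanishes for small \<open>t\<close>, hence identically, so \<open>E\<^sub>x h = 0\<close> for all \<open>x\<close> and \<open>g\<close> is
  allowed on \<open>\<real>\<^sup>N\<close> too: both parameter sets admit the same estimators.  The integrability
  of \<open>h\<close> against every shifted Gaussian \<open>p\<^sub>z\<close> follows from \<open>h \<in> L\<^sup>2(p\<^sub>z\<^sub>0)\<close>, since
  \<open>p\<^sub>z\<^sup>2\<close> is a constant multiple of \<open>p\<^sub>2\<^sub>z\<^sub>-\<^sub>z\<^sub>0 p\<^sub>z\<^sub>0\<close> and hence, by AM-GM,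
  \<open>|h| p\<^sub>z \<le> h\<^sup>2 p\<^sub>z\<^sub>0 + const \<cdot> p\<^sub>2\<^sub>z\<^sub>-\<^sub>z\<^sub>0\<close>.\<close>

subsection \<open>The Gaussian density\<close>

lemma gauss_dens_nonneg: "0 \<le> gauss_dens \<sigma> z"
  by (simp add: gauss_dens_def)

lemma gauss_dens_pos: "\<sigma> \<noteq> 0 \<Longrightarrow> 0 < gauss_dens \<sigma> z"
  by (simp add: gauss_dens_def)

lemma gauss_dens_measurable[measurable]:
  "(\<lambda>y. gauss_dens \<sigma> (y - z)) \<in> borel_measurable borel"
  unfolding gauss_dens_def by measurable

lemma nn_integral_gauss_kernel_finite:
  fixes \<sigma> :: real
  assumes "\<sigma> > 0"
  shows "(\<integral>\<^sup>+y. ennreal (exp (- (norm (y::real^'m))\<^sup>2 / (2 * \<sigma>\<^sup>2))) \<partial>lborel) < \<infinity>"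
proof -
  have exp_prod: "exp (- (norm y)\<^sup>2 / (2 * \<sigma>\<^sup>2)) = (\<Prod>b\<in>Basis. exp (- (y \<bullet> b)\<^sup>2 / (2 * \<sigma>\<^sup>2)))"
    for y :: "real^'m"
  proof -
    have "(norm y)\<^sup>2 = (\<Sum>b\<in>Basis. (y \<bullet> b)\<^sup>2)"
      by (subst power2_norm_eq_inner, subst euclidean_inner, simp add: power2_eq_square)
    then have "- (norm y)\<^sup>2 / (2 * \<sigma>\<^sup>2) = (\<Sum>b\<in>Basis. - (y \<bullet> b)\<^sup>2 / (2 * \<sigma>\<^sup>2))"
      by (simp add: sum_divide_distrib sum_negf)
    then show ?thesis
      by (simp add: exp_sum)
  qed
  have integrable_1d: "(\<integral>\<^sup>+t. ennreal (exp (- t\<^sup>2 / (2 * \<sigma>\<^sup>2))) \<partial>lborel) < \<infinity>"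
  proof -
    have "integrable lborel (\<lambda>t. sqrt (2 * pi * \<sigma>\<^sup>2) * normal_density 0 \<sigma> t)"
      using integrable_normal_density[OF assms] by simp
    moreover have "(\<lambda>t. sqrt (2 * pi * \<sigma>\<^sup>2) * normal_density 0 \<sigma> t) = (\<lambda>t. exp (- t\<^sup>2 / (2 * \<sigma>\<^sup>2)))"
      using assms by (auto simp: normal_density_def fun_eq_iff)
    ultimately have "integrable lborel (\<lambda>t. exp (- t\<^sup>2 / (2 * \<sigma>\<^sup>2)))"
      by simp
    then show ?thesis
      unfolding integrable_iff_bounded by simp
  qed
  have "(\<integral>\<^sup>+y. ennreal (exp (- (norm (y::real^'m))\<^sup>2 / (2 * \<sigma>\<^sup>2))) \<partial>lborel)
      = (\<integral>\<^sup>+y. (\<Prod>b\<in>(Basis::(real^'m) set). ennreal (exp (- (y \<bullet> b)\<^sup>2 / (2 * \<sigma>\<^sup>2)))) \<partial>lborel)"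
    by (subst prod_ennreal, simp, subst exp_prod, rule refl)
  also have "\<dots> = (\<Prod>b\<in>(Basis::(real^'m) set). (\<integral>\<^sup>+t. ennreal (exp (- t\<^sup>2 / (2 * \<sigma>\<^sup>2))) \<partial>lborel))"
    by (rule nn_integral_lborel_prod) auto
  also have "\<dots> < \<infinity>"
    using integrable_1d by (simp add: power_less_top_ennreal)
  finally show ?thesis .
qed

lemma integrable_gauss_dens:
  fixes \<sigma> :: real
  assumes "\<sigma> > 0"
  shows "integrable lborel (\<lambda>y::real^'m. gauss_dens \<sigma> (y - z))"
proof -
  have "(\<integral>\<^sup>+y. ennreal (exp (- (norm (y - z))\<^sup>2 / (2 * \<sigma>\<^sup>2))) \<partial>lborel)
     = (\<integral>\<^sup>+y. ennreal (exp (- (norm ((y::real^'m) - z))\<^sup>2 / (2 * \<sigma>\<^sup>2))) \<partial>distr lborel borel ((+) z))"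
    by (simp add: lborel_distr_plus)
  also have "\<dots> = (\<integral>\<^sup>+y. ennreal (exp (- (norm (y::real^'m))\<^sup>2 / (2 * \<sigma>\<^sup>2))) \<partial>lborel)"
    by (subst nn_integral_distr) auto
  also have "\<dots> < \<infinity>"
    using nn_integral_gauss_kernel_finite[OF assms] .
  finally have "integrable lborel (\<lambda>y::real^'m. exp (- (norm (y - z))\<^sup>2 / (2 * \<sigma>\<^sup>2)))"
    unfolding integrable_iff_bounded by simp
  then show ?thesis
    unfolding gauss_dens_def by (rule integrable_mult_right)
qed

text \<open>From \<open>2 |y - z|\<^sup>2 - |y - z\<^sub>0|\<^sup>2 = |y - (2z - z\<^sub>0)|\<^sup>2 - 2 |z - z\<^sub>0|\<^sup>2\<close>.\<close>
lemma gauss_dens_square: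
  fixes z z0 y :: "real^'m"
  assumes "\<sigma> \<noteq> 0"
  shows "(gauss_dens \<sigma> (y - z))\<^sup>2
    = exp ((norm (z - z0))\<^sup>2 / \<sigma>\<^sup>2) * gauss_dens \<sigma> (y - (2 *\<^sub>R z - z0)) * gauss_dens \<sigma> (y - z0)"
proof -
  have sq_norms: "2 * (norm (y - z))\<^sup>2 = (norm (y - (2 *\<^sub>R z - z0)))\<^sup>2 + (norm (y - z0))\<^sup>2 - 2 * (norm (z - z0))\<^sup>2"
    by (simp add: power2_norm_eq_inner inner_simps inner_commute algebra_simps)
  have "2 * (- (norm (y - z))\<^sup>2 / (2 * \<sigma>\<^sup>2)) = - (2 * (norm (y - z))\<^sup>2) / (2 * \<sigma>\<^sup>2)"
    by simp
  also have "\<dots> = - ((norm (y - (2 *\<^sub>R z - z0)))\<^sup>2 + (norm (y - z0))\<^sup>2 - 2 * (norm (z - z0))\<^sup>2) / (2 * \<sigma>\<^sup>2)"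
    by (simp only: sq_norms)
  also have "\<dots> = (norm (z - z0))\<^sup>2 / \<sigma>\<^sup>2 + - (norm (y - (2 *\<^sub>R z - z0)))\<^sup>2 / (2 * \<sigma>\<^sup>2)
        + - (norm (y - z0))\<^sup>2 / (2 * \<sigma>\<^sup>2)"
    using assms by (simp add: field_simps)
  finally have "(exp (- (norm (y - z))\<^sup>2 / (2 * \<sigma>\<^sup>2)))\<^sup>2 = exp ((norm (z - z0))\<^sup>2 / \<sigma>\<^sup>2)
      * exp (- (norm (y - (2 *\<^sub>R z - z0)))\<^sup>2 / (2 * \<sigma>\<^sup>2)) * exp (- (norm (y - z0))\<^sup>2 / (2 * \<sigma>\<^sup>2))"
    by (simp add: power2_eq_square exp_add[symmetric] mult_2[symmetric])
  then show ?thesis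
    unfolding gauss_dens_def power_mult_distrib by (simp only: ac_simps power2_eq_square)
qed

lemma gauss_dens_along_line:
  fixes z1 w y :: "real^'m"
  assumes "\<sigma> \<noteq> 0"
  shows "gauss_dens \<sigma> (y - (z1 + t *\<^sub>R w))
    = gauss_dens \<sigma> (y - z1) * exp (t * (((y - z1) \<bullet> w) / \<sigma>\<^sup>2)) * exp (- t\<^sup>2 * ((norm w)\<^sup>2 / (2 * \<sigma>\<^sup>2)))"
proof -
  have "(norm (y - (z1 + t *\<^sub>R w)))\<^sup>2 = (norm (y - z1))\<^sup>2 - 2 * t * ((y - z1) \<bullet> w) + t\<^sup>2 * (norm w)\<^sup>2"
    by (simp add: power2_norm_eq_inner inner_simps inner_commute algebra_simps power2_eq_square[of t])
  then have "- (norm (y - (z1 + t *\<^sub>R w)))\<^sup>2 / (2 * \<sigma>\<^sup>2)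
      = - ((norm (y - z1))\<^sup>2 - 2 * t * ((y - z1) \<bullet> w) + t\<^sup>2 * (norm w)\<^sup>2) / (2 * \<sigma>\<^sup>2)"
    by simp
  also have "\<dots> = - (norm (y - z1))\<^sup>2 / (2 * \<sigma>\<^sup>2) + t * (((y - z1) \<bullet> w) / \<sigma>\<^sup>2)
      + - t\<^sup>2 * ((norm w)\<^sup>2 / (2 * \<sigma>\<^sup>2))"
    using assms by (simp add: field_simps)
  finally have exponent: "- (norm (y - (z1 + t *\<^sub>R w)))\<^sup>2 / (2 * \<sigma>\<^sup>2)
      = - (norm (y - z1))\<^sup>2 / (2 * \<sigma>\<^sup>2) + t * (((y - z1) \<bullet> w) / \<sigma>\<^sup>2)
      + - t\<^sup>2 * ((norm w)\<^sup>2 / (2 * \<sigma>\<^sup>2))" .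
  show ?thesis
    unfolding gauss_dens_def exponent exp_add by (simp add: algebra_simps)
qed

subsection \<open>Gaussian convolution\<close>

definition gauss_conv :: "real \<Rightarrow> (real^'m \<Rightarrow> real) \<Rightarrow> real^'m \<Rightarrow> real" where
  "gauss_conv \<sigma> h z = (\<integral>y. h y * gauss_dens \<sigma> (y - z) \<partial>lborel)"

lemma gauss_conv_add:
  assumes "integrable lborel (\<lambda>y. f y * gauss_dens \<sigma> (y - z))"
    and "integrable lborel (\<lambda>y. g y * gauss_dens \<sigma> (y - z))"
  shows "gauss_conv \<sigma> (\<lambda>y. f y + g y) z = gauss_conv \<sigma> f z + gauss_conv \<sigma> g z"
  unfolding gauss_conv_def distrib_right using assms by (rule Bochner_Integration.integral_add)

lemma abs_mult_le_of_square_eq: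
  fixes a p q r :: real
  assumes "0 < p" "0 \<le> q" "0 \<le> r" "r\<^sup>2 = q * p"
  shows "\<bar>a\<bar> * r \<le> a\<^sup>2 * p + q"
proof -
  have "p * (2 * \<bar>a\<bar> * r) = 2 * (\<bar>a\<bar> * p) * r"
    by simp
  also have "\<dots> \<le> (\<bar>a\<bar> * p)\<^sup>2 + r\<^sup>2"
    by (rule sum_squares_bound)
  also have "\<dots> = p * (a\<^sup>2 * p + q)"
    using assms(4) by (simp add: power2_eq_square algebra_simps)
  finally have "2 * \<bar>a\<bar> * r \<le> a\<^sup>2 * p + q"
    using assms(1) by simp
  moreover have "0 \<le> \<bar>a\<bar> * r"
    using assms(3) by simp
  ultimately show ?thesis
    by linarith
qed

lemma integrable_gauss_shift:
  fixes h :: "real^'m \<Rightarrow> real"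
  assumes \<sigma>: "\<sigma> > 0" and [measurable]: "h \<in> borel_measurable borel"
    and square_integrable: "integrable lborel (\<lambda>y. (h y)\<^sup>2 * gauss_dens \<sigma> (y - z0))"
  shows "integrable lborel (\<lambda>y. h y * gauss_dens \<sigma> (y - z))"
proof (rule Bochner_Integration.integrable_bound)
  define q where "q y = exp ((norm (z - z0))\<^sup>2 / \<sigma>\<^sup>2) * gauss_dens \<sigma> (y - (2 *\<^sub>R z - z0))" for y
  show "integrable lborel (\<lambda>y. (h y)\<^sup>2 * gauss_dens \<sigma> (y - z0) + q y)"
    unfolding q_def
    by (intro Bochner_Integration.integrable_add square_integrable integrable_mult_right
        integrable_gauss_dens \<sigma>)
  show "(\<lambda>y. h y * gauss_dens \<sigma> (y - z)) \<in> borel_measurable lborel"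
    by measurable
  show "AE y in lborel. norm (h y * gauss_dens \<sigma> (y - z)) \<le> norm ((h y)\<^sup>2 * gauss_dens \<sigma> (y - z0) + q y)"
  proof (rule AE_I2)
    fix y
    have "\<bar>h y\<bar> * gauss_dens \<sigma> (y - z) \<le> (h y)\<^sup>2 * gauss_dens \<sigma> (y - z0) + q y"
      using \<sigma> gauss_dens_square[of \<sigma> y z z0]
      by (intro abs_mult_le_of_square_eq) (auto simp: q_def gauss_dens_pos gauss_dens_nonneg)
    moreover have "0 \<le> q y"
      by (simp add: q_def gauss_dens_nonneg)
    ultimately show "norm (h y * gauss_dens \<sigma> (y - z)) \<le> norm ((h y)\<^sup>2 * gauss_dens \<sigma> (y - z0) + q y)"
      by (simp add: abs_mult gauss_dens_nonneg)
  qed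
qed

subsection \<open>Power series and the identity theorem on lines\<close>

lemma sum_abs_power_div_fact_le_exp: "(\<Sum>n<N. \<bar>x::real\<bar>^n / fact n) \<le> exp \<bar>x\<bar>"
proof -
  have exp_sums: "(\<lambda>n. \<bar>x\<bar>^n / fact n) sums exp \<bar>x\<bar>"
    using exp_converges[of "\<bar>x\<bar>"] by (simp add: divide_inverse_commute)
  then have "(\<Sum>n<N. \<bar>x\<bar>^n / fact n) \<le> (\<Sum>n. \<bar>x\<bar>^n / fact n)"
    by (intro sum_le_suminf) (auto simp: sums_iff)
  then show ?thesis
    using exp_sums by (simp add: sums_iff)
qed

lemma abs_power_div_fact_le_exp: "\<bar>x::real\<bar>^n / fact n \<le> exp \<bar>x\<bar>"
proof -
  have "\<bar>x\<bar>^n / fact n \<le> (\<Sum>k<Suc n. \<bar>x\<bar>^k / fact k)"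
    by (simp add: sum_nonneg)
  also have "\<dots> \<le> exp \<bar>x\<bar>"
    by (rule sum_abs_power_div_fact_le_exp)
  finally show ?thesis .
qed

lemma exp_abs_le_exp_add_exp_minus: "exp \<bar>x::real\<bar> \<le> exp x + exp (- x)"
  by (cases "x \<ge> 0") (auto simp: add_increasing2 add_increasing)

lemma integrable_mult_power_div_fact:
  fixes \<psi> a :: "'a \<Rightarrow> real"
  assumes [measurable]: "\<psi> \<in> borel_measurable M" "a \<in> borel_measurable M"
    and "integrable M (\<lambda>y. \<psi> y * exp (a y))" "integrable M (\<lambda>y. \<psi> y * exp (- a y))"
  shows "integrable M (\<lambda>y. \<psi> y * a y ^ n / fact n)"
proof (rule Bochner_Integration.integrable_bound)
  show "integrable M (\<lambda>y. \<bar>\<psi> y * exp (a y)\<bar> + \<bar>\<psi> y * exp (- a y)\<bar>)"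
    using assms(3,4) by (intro Bochner_Integration.integrable_add integrable_abs)
  show "(\<lambda>y. \<psi> y * a y ^ n / fact n) \<in> borel_measurable M"
    by measurable
  show "AE y in M. norm (\<psi> y * a y ^ n / fact n) \<le> norm (\<bar>\<psi> y * exp (a y)\<bar> + \<bar>\<psi> y * exp (- a y)\<bar>)"
  proof (rule AE_I2)
    fix y
    have "\<bar>\<psi> y * a y ^ n / fact n\<bar> = \<bar>\<psi> y\<bar> * (\<bar>a y\<bar> ^ n / fact n)"
      by (simp add: abs_mult power_abs)
    also have "\<dots> \<le> \<bar>\<psi> y\<bar> * (exp (a y) + exp (- a y))"
      by (intro mult_left_mono order.trans[OF abs_power_div_fact_le_exp exp_abs_le_exp_add_exp_minus]) simp
    finally show "norm (\<psi> y * a y ^ n / fact n) \<le> norm (\<bar>\<psi> y * exp (a y)\<bar> + \<bar>\<psi> y * exp (- a y)\<bar>)"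
      by (simp add: abs_mult algebra_simps)
  qed
qed

text \<open>Dominated convergence: the partial sums are bounded by \<open>|\<psi>| (exp (t a) + exp (-t a))\<close>.\<close>
lemma integral_mult_exp_sums:
  fixes \<psi> a :: "'a \<Rightarrow> real"
  assumes [measurable]: "\<psi> \<in> borel_measurable M" "a \<in> borel_measurable M"
    and integrable: "\<And>t. integrable M (\<lambda>y. \<psi> y * exp (t * a y))"
  shows "(\<lambda>n. (\<integral>y. \<psi> y * a y ^ n / fact n \<partial>M) * t ^ n) sums (\<integral>y. \<psi> y * exp (t * a y) \<partial>M)"
proof -
  define w where "w y = \<bar>\<psi> y * exp (t * a y)\<bar> + \<bar>\<psi> y * exp (- t * a y)\<bar>" for y
  define s where "s N y = (\<Sum>n<N. \<psi> y * (t * a y) ^ n / fact n)" for N y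
  have "(\<lambda>N. integral\<^sup>L M (s N)) \<longlonglongrightarrow> (\<integral>y. \<psi> y * exp (t * a y) \<partial>M)"
  proof (rule integral_dominated_convergence)
    show "integrable M w"
      unfolding w_def by (intro Bochner_Integration.integrable_add integrable_abs integrable)
    show "AE y in M. (\<lambda>N. s N y) \<longlonglongrightarrow> \<psi> y * exp (t * a y)"
    proof (rule AE_I2)
      fix y
      have "(\<lambda>n. (t * a y)^n / fact n) sums exp (t * a y)"
        using exp_converges[of "t * a y"] by (simp add: divide_inverse_commute)
      then have "(\<lambda>n. \<psi> y * ((t * a y)^n / fact n)) sums (\<psi> y * exp (t * a y))"
        by (rule sums_mult)
      then show "(\<lambda>N. s N y) \<longlonglongrightarrow> \<psi> y * exp (t * a y)"
        unfolding s_def sums_def by (simp add: algebra_simps)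
    qed
    show "AE y in M. norm (s N y) \<le> w y" for N
    proof (rule AE_I2)
      fix y
      have "\<bar>s N y\<bar> \<le> (\<Sum>n<N. \<bar>\<psi> y * (t * a y) ^ n / fact n\<bar>)"
        unfolding s_def by (rule sum_abs)
      also have "\<dots> = \<bar>\<psi> y\<bar> * (\<Sum>n<N. \<bar>t * a y\<bar> ^ n / fact n)"
        by (simp add: sum_distrib_left abs_mult power_abs)
      also have "\<dots> \<le> \<bar>\<psi> y\<bar> * (exp (t * a y) + exp (- (t * a y)))"
        by (intro mult_left_mono order.trans[OF sum_abs_power_div_fact_le_exp
              exp_abs_le_exp_add_exp_minus]) simp
      also have "\<dots> = w y"
        unfolding w_def by (simp add: abs_mult algebra_simps)
      finally show "norm (s N y) \<le> w y"
        by simp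
    qed
  qed (unfold s_def, measurable)
  moreover have "integral\<^sup>L M (s N) = (\<Sum>n<N. (\<integral>y. \<psi> y * a y ^ n / fact n \<partial>M) * t ^ n)" for N
  proof -
    have term_integrable: "integrable M (\<lambda>y. \<psi> y * a y ^ n / fact n)" for n
      using integrable[of 1] integrable[of "- 1"] by (intro integrable_mult_power_div_fact) auto
    have "integral\<^sup>L M (s N) = (\<integral>y. (\<Sum>n<N. t ^ n * (\<psi> y * a y ^ n / fact n)) \<partial>M)"
      unfolding s_def by (simp add: power_mult_distrib algebra_simps)
    also have "\<dots> = (\<Sum>n<N. (\<integral>y. t ^ n * (\<psi> y * a y ^ n / fact n) \<partial>M))"
      by (intro Bochner_Integration.integral_sum integrable_mult_right term_integrable)
    finally show ?thesis
      by (simp add: mult.commute)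
  qed
  ultimately show ?thesis
    unfolding sums_def by simp
qed

text \<open>Dividing by the lowest power \<open>t\<^sup>n\<^sup>0\<close> with a nonzero coefficient
  gives a series that is continuous at \<open>0\<close> with value \<open>c n\<^sub>0\<close>, yet vanishes near \<open>0\<close>.\<close>
lemma powser_coeff_eq_0_if_vanishes_near_0:
  fixes c :: "nat \<Rightarrow> real"
  assumes sums: "\<And>t. (\<lambda>n. c n * t^n) sums G t" and "\<delta> > 0"
    and vanishes: "\<And>t. \<bar>t\<bar> < \<delta> \<Longrightarrow> G t = 0"
  shows "c n = 0"
proof (rule ccontr)
  assume "c n \<noteq> 0"
  then have ex: "\<exists>n. c n \<noteq> 0" by blast
  define n0 where "n0 = (LEAST n. c n \<noteq> 0)"
  have cn0: "c n0 \<noteq> 0"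
    unfolding n0_def by (rule LeastI_ex[OF ex])
  have below: "c k = 0" if "k < n0" for k
    using not_less_Least[of k "\<lambda>n. c n \<noteq> 0"] that unfolding n0_def by blast
  define P where "P t = (\<Sum>k. c (k + n0) * t^k)" for t :: real
  have P_sums: "(\<lambda>k. c (k + n0) * t^k) sums (G t / t ^ n0)" if "t \<noteq> 0" for t
  proof -
    have "(\<lambda>k. c (k + n0) * t^(k + n0)) sums (G t - (\<Sum>i<n0. c i * t^i))"
      using sums_split_initial_segment[OF sums[of t], of n0] by simp
    then have "(\<lambda>k. c (k + n0) * t^(k + n0) / t ^ n0) sums (G t / t ^ n0)"
      by (intro sums_divide) (simp add: below)
    then show ?thesis
      using that by (simp add: power_add)
  qed
  have "summable (\<lambda>k. c (k + n0) * t^k)" for t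
    by (cases "t = 0") (auto intro: sums_summable[OF P_sums])
  then have "isCont P 0"
    unfolding P_def by (rule isCont_powser_converges_everywhere)
  moreover have "P 0 = c n0"
    unfolding P_def using powser_zero[of "\<lambda>k. c (k + n0)"] by simp
  ultimately have "(P \<longlongrightarrow> c n0) (at 0)"
    by (simp add: isCont_def)
  moreover have "eventually (\<lambda>t. P t = 0) (at (0::real))"
    unfolding eventually_at
    using \<open>\<delta> > 0\<close> P_sums vanishes by (auto simp: P_def sums_iff)
  then have "(P \<longlongrightarrow> 0) (at 0)"
    by (rule tendsto_eventually)
  ultimately have "c n0 = 0"
    using tendsto_unique by force
  with cn0 show False ..
qed

lemma gauss_conv_along_line_eq_0:
  fixes h :: "real^'m \<Rightarrow> real"
  assumes \<sigma>: "\<sigma> > 0" and [measurable]: "h \<in> borel_measurable borel"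
    and integrable: "\<And>z. integrable lborel (\<lambda>y. h y * gauss_dens \<sigma> (y - z))"
    and "\<delta> > 0" and vanishes: "\<And>t. \<bar>t\<bar> < \<delta> \<Longrightarrow> gauss_conv \<sigma> h (z1 + t *\<^sub>R w) = 0"
  shows "gauss_conv \<sigma> h (z1 + w) = 0"
proof -
  define \<psi> where "\<psi> y = h y * gauss_dens \<sigma> (y - z1)" for y
  define a where "a y = ((y - z1) \<bullet> w) / \<sigma>\<^sup>2" for y
  define \<beta> where "\<beta> = (norm w)\<^sup>2 / (2 * \<sigma>\<^sup>2)"
  have [measurable]: "\<psi> \<in> borel_measurable lborel" "a \<in> borel_measurable lborel"
    unfolding \<psi>_def a_def by measurable
  have on_line: "h y * gauss_dens \<sigma> (y - (z1 + t *\<^sub>R w)) = \<psi> y * exp (t * a y) * exp (- t\<^sup>2 * \<beta>)" for y t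
    unfolding \<psi>_def a_def \<beta>_def using gauss_dens_along_line[of \<sigma> y z1 t w] \<sigma> by simp
  have "\<psi> y * exp (t * a y) = h y * gauss_dens \<sigma> (y - (z1 + t *\<^sub>R w)) * exp (t\<^sup>2 * \<beta>)" for y t
    unfolding on_line by (simp add: mult.assoc exp_add[symmetric])
  then have "integrable lborel (\<lambda>y. \<psi> y * exp (t * a y))" for t
    by (simp add: integrable_mult_left integrable)
  then have sums: "(\<lambda>n. (\<integral>y. \<psi> y * a y ^ n / fact n \<partial>lborel) * t ^ n) sums (\<integral>y. \<psi> y * exp (t * a y) \<partial>lborel)" for t
    by (intro integral_mult_exp_sums) auto
  have conv_eq: "gauss_conv \<sigma> h (z1 + t *\<^sub>R w) = (\<integral>y. \<psi> y * exp (t * a y) \<partial>lborel) * exp (- t\<^sup>2 * \<beta>)" for t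
    unfolding gauss_conv_def on_line by (rule integral_mult_left_zero)
  have series_vanishes: "(\<integral>y. \<psi> y * exp (t * a y) \<partial>lborel) = 0" if "\<bar>t\<bar> < \<delta>" for t
    using vanishes[OF that] conv_eq[of t] by simp
  have "(\<integral>y. \<psi> y * a y ^ n / fact n \<partial>lborel) = 0" for n
    by (rule powser_coeff_eq_0_if_vanishes_near_0[OF sums \<open>\<delta> > 0\<close> series_vanishes])
  then have "(\<integral>y. \<psi> y * exp (1 * a y) \<partial>lborel) = 0"
    using sums[of 1] by (simp add: sums_iff)
  then show ?thesis
    using conv_eq[of 1] by simp
qed

lemma gauss_conv_linear_eq_0:
  fixes f :: "'a::real_normed_vector \<Rightarrow> real^'m" and h :: "real^'m \<Rightarrow> real"
  assumes "linear f" and \<sigma>: "\<sigma> > 0" and [measurable]: "h \<in> borel_measurable borel"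
    and integrable: "\<And>z. integrable lborel (\<lambda>y. h y * gauss_dens \<sigma> (y - z))"
    and "open U" "U \<noteq> {}" and vanishes: "\<And>x. x \<in> U \<Longrightarrow> gauss_conv \<sigma> h (f x) = 0"
  shows "gauss_conv \<sigma> h (f x) = 0"
proof -
  obtain x1 r where "r > 0" and ball: "ball x1 r \<subseteq> U"
    using \<open>open U\<close> \<open>U \<noteq> {}\<close> by (meson ex_in_conv openE)
  define \<delta> where "\<delta> = r / (norm (x - x1) + 1)"
  have norm_pos: "norm (x - x1) + 1 > 0"
    using norm_ge_zero[of "x - x1"] by linarith
  have "gauss_conv \<sigma> h (f x1 + f (x - x1)) = 0"
  proof (rule gauss_conv_along_line_eq_0[OF \<sigma> _ integrable])
    show "\<delta> > 0"
      unfolding \<delta>_def using \<open>r > 0\<close> norm_pos by simp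
    fix t :: real
    assume "\<bar>t\<bar> < \<delta>"
    have "dist x1 (x1 + t *\<^sub>R (x - x1)) \<le> \<bar>t\<bar> * (norm (x - x1) + 1)"
      by (simp add: dist_norm mult_left_mono)
    also have "\<dots> < \<delta> * (norm (x - x1) + 1)"
      using \<open>\<bar>t\<bar> < \<delta>\<close> norm_pos by (intro mult_strict_right_mono) auto
    also have "\<dots> = r"
      unfolding \<delta>_def using norm_pos by simp
    finally have "x1 + t *\<^sub>R (x - x1) \<in> U"
      using ball by auto
    then have "gauss_conv \<sigma> h (f (x1 + t *\<^sub>R (x - x1))) = 0"
      by (rule vanishes)
    then show "gauss_conv \<sigma> h (f x1 + t *\<^sub>R f (x - x1)) = 0"
      by (simp only: linear_add[OF \<open>linear f\<close>] linear_scale[OF \<open>linear f\<close>])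
  qed simp
  moreover have "f x1 + f (x - x1) = f x"
    by (simp add: linear_add[OF \<open>linear f\<close>, symmetric])
  ultimately show ?thesis
    by simp
qed

subsection \<open>Allowed estimators in the linear Gaussian model\<close>

lemma integrable_obs_meas_iff:
  assumes [measurable]: "f \<in> borel_measurable borel"
  shows "integrable (obs_meas H \<sigma> x) f \<longleftrightarrow> integrable lborel (\<lambda>y. f y * gauss_dens \<sigma> (y - H *v x))"
  unfolding obs_meas_def
  by (subst integrable_density) (auto simp: gauss_dens_nonneg mult.commute)

lemma integral_obs_meas:
  assumes [measurable]: "f \<in> borel_measurable borel"
  shows "integral\<^sup>L (obs_meas H \<sigma> x) f = gauss_conv \<sigma> f (H *v x)"
  unfolding obs_meas_def gauss_conv_def
  by (subst integral_density) (auto simp: gauss_dens_nonneg mult.commute)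

lemma finite_measure_obs_meas:
  assumes "\<sigma> > 0"
  shows "finite_measure (obs_meas H \<sigma> x)"
proof
  have "integrable (obs_meas H \<sigma> x) (\<lambda>_. 1 :: real)"
    using assms by (simp add: integrable_obs_meas_iff integrable_gauss_dens)
  then show "emeasure (obs_meas H \<sigma> x) (space (obs_meas H \<sigma> x)) \<noteq> \<infinity>"
    by (simp add: integrable_iff_bounded)
qed

lemma integrable_square_diff:
  fixes f g :: "'a \<Rightarrow> real"
  assumes "finite_measure M" and [measurable]: "f \<in> borel_measurable M" "g \<in> borel_measurable M"
    and "integrable M (\<lambda>y. (f y - a)\<^sup>2)" "integrable M (\<lambda>y. (g y - b)\<^sup>2)"
  shows "integrable M (\<lambda>y. (f y - g y)\<^sup>2)"
proof (rule Bochner_Integration.integrable_bound)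
  show "integrable M (\<lambda>y. 3 * (f y - a)\<^sup>2 + 3 * (g y - b)\<^sup>2 + 3 * (a - b)\<^sup>2)"
    using assms by (intro Bochner_Integration.integrable_add integrable_mult_right finite_measure.integrable_const)
  show "(\<lambda>y. (f y - g y)\<^sup>2) \<in> borel_measurable M"
    by measurable
  show "AE y in M. norm ((f y - g y)\<^sup>2) \<le> norm (3 * (f y - a)\<^sup>2 + 3 * (g y - b)\<^sup>2 + 3 * (a - b)\<^sup>2)"
  proof (rule AE_I2)
    fix y
    have "0 \<le> (f y - a + (g y - b))\<^sup>2 + (g y - b + (a - b))\<^sup>2 + (f y - a - (a - b))\<^sup>2"
      by simp
    then have "(f y - g y)\<^sup>2 \<le> 3 * (f y - a)\<^sup>2 + 3 * (g y - b)\<^sup>2 + 3 * (a - b)\<^sup>2"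
      by (simp add: power2_eq_square algebra_simps)
    then show "norm ((f y - g y)\<^sup>2) \<le> norm (3 * (f y - a)\<^sup>2 + 3 * (g y - b)\<^sup>2 + 3 * (a - b)\<^sup>2)"
      by simp
  qed
qed

lemma allowed_UNIV_if_allowed_on_open_subset:
  assumes \<sigma>: "\<sigma> > 0" and U: "open U" "U \<noteq> {}" "U \<subseteq> X"
    and g0: "allowed H \<sigma> k UNIV c x0 g0" and g: "allowed H \<sigma> k X c x0 g"
  shows "allowed H \<sigma> k UNIV c x0 g"
proof -
  have [measurable]: "g \<in> borel_measurable borel" "g0 \<in> borel_measurable borel"
    using g g0 by (simp_all add: allowed_def)
  have g_mean: "gauss_conv \<sigma> g (H *v x) - x $ k = c x" if "x \<in> X" for x
    using g that by (simp add: allowed_def lgm_mean_def integral_obs_meas)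
  have g0_integrable: "integrable lborel (\<lambda>y. g0 y * gauss_dens \<sigma> (y - H *v x))" for x
    using g0 by (simp add: allowed_def integrable_obs_meas_iff)
  have g0_mean: "gauss_conv \<sigma> g0 (H *v x) - x $ k = c x" for x
    using g0 by (simp add: allowed_def lgm_mean_def integral_obs_meas)
  define h where "h y = g y - g0 y" for y
  have [measurable]: "h \<in> borel_measurable borel"
    unfolding h_def by measurable
  have g_split: "g = (\<lambda>y. h y + g0 y)"
    by (simp add: h_def fun_eq_iff)
  have g_var: "integrable (obs_meas H \<sigma> x0) (\<lambda>y. (g y - lgm_mean H \<sigma> x0 g)\<^sup>2)"
    and g0_var: "integrable (obs_meas H \<sigma> x0) (\<lambda>y. (g0 y - lgm_mean H \<sigma> x0 g0)\<^sup>2)"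
    using g g0 by (simp_all add: allowed_def)
  have "g \<in> borel_measurable (obs_meas H \<sigma> x0)" "g0 \<in> borel_measurable (obs_meas H \<sigma> x0)"
    unfolding obs_meas_def by measurable
  then have "integrable (obs_meas H \<sigma> x0) (\<lambda>y. (h y)\<^sup>2)"
    unfolding h_def by (rule integrable_square_diff[OF finite_measure_obs_meas[OF \<sigma>] _ _ g_var g0_var])
  then have h_square_integrable: "integrable lborel (\<lambda>y. (h y)\<^sup>2 * gauss_dens \<sigma> (y - H *v x0))"
    by (simp add: integrable_obs_meas_iff)
  have h_integrable: "integrable lborel (\<lambda>y. h y * gauss_dens \<sigma> (y - z))" for z
    by (rule integrable_gauss_shift[OF \<sigma> _ h_square_integrable]) measurable
  have conv_split: "gauss_conv \<sigma> g (H *v x) = gauss_conv \<sigma> h (H *v x) + gauss_conv \<sigma> g0 (H *v x)" for x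
    by (subst g_split) (rule gauss_conv_add[OF h_integrable g0_integrable])
  have h_vanishes_on_U: "gauss_conv \<sigma> h (H *v x) = 0" if "x \<in> U" for x
    using conv_split[of x] g_mean[of x] g0_mean[of x] that U by auto
  have h_vanishes: "gauss_conv \<sigma> h (H *v x) = 0" for x
    by (rule gauss_conv_linear_eq_0[OF matrix_vector_mul_linear \<sigma> _ h_integrable U(1,2) h_vanishes_on_U])
      measurable
  have "integrable lborel (\<lambda>y. g y * gauss_dens \<sigma> (y - H *v x))" for x
    unfolding g_split distrib_right by (intro Bochner_Integration.integrable_add h_integrable g0_integrable)
  then have "integrable (obs_meas H \<sigma> x) g \<and> lgm_mean H \<sigma> x g - x $ k = c x" for x
    using conv_split[of x] h_vanishes[of x] g0_mean[of x]
    by (simp add: integrable_obs_meas_iff lgm_mean_def integral_obs_meas)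
  then show ?thesis
    using g by (simp add: allowed_def)
qed

theorem theorem13:
  fixes H :: "real^'n^'m" and \<sigma> :: real and k :: 'n
    and X :: "(real^'n) set" and x0 :: "real^'n" and c :: "real^'n \<Rightarrow> real"
  assumes "\<sigma> > 0"
    and "\<exists>U. open U \<and> U \<noteq> {} \<and> U \<subseteq> X"
    and "x0 \<in> X"
    and "valid_bias H \<sigma> k UNIV c x0"
  shows "min_var H \<sigma> k X c x0 = min_var H \<sigma> k UNIV c x0
         \<and> (\<forall>g. is_LMV H \<sigma> k UNIV c x0 g \<longrightarrow> is_LMV H \<sigma> k X c x0 g)"
proof -
  obtain U where U: "open U" "U \<noteq> {}" "U \<subseteq> X"
    using assms(2) by blast
  obtain g0 where g0: "allowed H \<sigma> k UNIV c x0 g0"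
    using assms(4) unfolding valid_bias_def by blast
  have allowed_iff: "allowed H \<sigma> k X c x0 g \<longleftrightarrow> allowed H \<sigma> k UNIV c x0 g" for g
  proof
    show "allowed H \<sigma> k X c x0 g \<Longrightarrow> allowed H \<sigma> k UNIV c x0 g"
      by (rule allowed_UNIV_if_allowed_on_open_subset[OF assms(1) U g0])
    show "allowed H \<sigma> k UNIV c x0 g \<Longrightarrow> allowed H \<sigma> k X c x0 g"
      unfolding allowed_def by auto
  qed
  have "min_var H \<sigma> k X c x0 = min_var H \<sigma> k UNIV c x0"
    unfolding min_var_def allowed_iff ..
  with allowed_iff show ?thesis
    unfolding is_LMV_def by simp
qed

end
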